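(* Let $G=(V,E)$ be an $n$-vertex graph with nonnegative interactions $J$, let $\mu$ be the associated zero-field Ising measure, and let $F\subset V$ be a subset of size $\lfloor \sqrt n/\log n\rfloor$ satisfying $\sum_{u,v\in F,u\ne v}\mathrm{Cov}_\mu(\sigma(u),\sigma(v))\le 2/\log n$. Let $(Z_t^{(+)})$ be the chain $(Z_t)$ on $\{-1,1\}^F$ started from the all-plus configuration, and $\mathcal S_t=\sum_{v\in F}Z_t^{(+)}(v)$. Then for all $t\ge0$, $$\mathbb E_+(\mathcal S_t)\ge|F|\Big(1-\frac1{|F|}\Big)^t.$$
   Context: The Ising measure is $\mu(\sigma)=Z^{-1}\exp(\sum_{uv\in E}J_{uv}\sigma(u)\sigma(v))$ on $\{\pm1\}^V$, $J_{uv}\ge0$. The chain $(Z_t)$ on $\{-1,1\}^F$: at each step a vertex $v\in F$ is chosen uniformly at random and $Z(v)$ is resampled from the conditional law of $\sigma(v)$ under $\mu$ given the spins on $F\setminus\{v\}$ (spins outside $F$ are integrated out). Its stationary law $\nu_F$ is the marginal of $\mu$ on $F$. *)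

theory Defs
  imports Complex_Main "HOL-Library.FuncSet"
begin

definition configs :: "'a set \<Rightarrow> ('a \<Rightarrow> real) set" where
  "configs A = PiE A (\<lambda>_. {-1, 1})"

text \<open>Unnormalised Ising weight; E is a set of edges (2-element subsets of V),
  J the interaction on edges: exp (sum over uv in E of J_uv sigma(u) sigma(v)).\<close>
definition ising_weight :: "'a set set \<Rightarrow> ('a set \<Rightarrow> real) \<Rightarrow> ('a \<Rightarrow> real) \<Rightarrow> real" where
  "ising_weight E J \<sigma> = exp (\<Sum>e\<in>E. J e * (\<Prod>v\<in>e. \<sigma> v))"

definition partition_fn :: "'a set \<Rightarrow> 'a set set \<Rightarrow> ('a set \<Rightarrow> real) \<Rightarrow> real" where
  "partition_fn V E J = (\<Sum>\<sigma>\<in>configs V. ising_weight E J \<sigma>)"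

definition ising :: "'a set \<Rightarrow> 'a set set \<Rightarrow> ('a set \<Rightarrow> real) \<Rightarrow> ('a \<Rightarrow> real) \<Rightarrow> real" where
  "ising V E J \<sigma> = ising_weight E J \<sigma> / partition_fn V E J"

definition ising_exp :: "'a set \<Rightarrow> 'a set set \<Rightarrow> ('a set \<Rightarrow> real) \<Rightarrow> (('a \<Rightarrow> real) \<Rightarrow> real) \<Rightarrow> real" where
  "ising_exp V E J f = (\<Sum>\<sigma>\<in>configs V. ising V E J \<sigma> * f \<sigma>)"

definition ising_cov :: "'a set \<Rightarrow> 'a set set \<Rightarrow> ('a set \<Rightarrow> real) \<Rightarrow> 'a \<Rightarrow> 'a \<Rightarrow> real" where
  "ising_cov V E J u v =
     ising_exp V E J (\<lambda>\<sigma>. \<sigma> u * \<sigma> v)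
     - ising_exp V E J (\<lambda>\<sigma>. \<sigma> u) * ising_exp V E J (\<lambda>\<sigma>. \<sigma> v)"

definition marginal :: "'a set \<Rightarrow> 'a set set \<Rightarrow> ('a set \<Rightarrow> real) \<Rightarrow> 'a set \<Rightarrow> ('a \<Rightarrow> real) \<Rightarrow> real" where
  "marginal V E J F \<tau> = (\<Sum>\<sigma>\<in>{\<sigma>\<in>configs V. restrict \<sigma> F = \<tau>}. ising V E J \<sigma>)"

text \<open>Transition kernel of the chain Z_t on {-1,1}^F: pick v in F uniformly, resample Z(v)
  from the conditional law of sigma(v) under nu_F given the spins on F - {v}.\<close>
definition chain_kernel :: "'a set \<Rightarrow> 'a set set \<Rightarrow> ('a set \<Rightarrow> real) \<Rightarrow> 'a set
    \<Rightarrow> ('a \<Rightarrow> real) \<Rightarrow> ('a \<Rightarrow> real) \<Rightarrow> real" where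
  "chain_kernel V E J F \<tau> \<tau>' =
     (1 / real (card F)) * (\<Sum>v\<in>F.
        if (\<forall>u\<in>F - {v}. \<tau>' u = \<tau> u)
        then marginal V E J F \<tau>' /
             (marginal V E J F (\<tau>(v := 1)) + marginal V E J F (\<tau>(v := -1)))
        else 0)"

primrec chain_law :: "'a set \<Rightarrow> 'a set set \<Rightarrow> ('a set \<Rightarrow> real) \<Rightarrow> 'a set
    \<Rightarrow> nat \<Rightarrow> ('a \<Rightarrow> real) \<Rightarrow> real" where
  "chain_law V E J F 0 \<tau> = (if \<tau> = restrict (\<lambda>_. 1) F then 1 else 0)"
| "chain_law V E J F (Suc t) \<tau>' =
     (\<Sum>\<tau>\<in>configs F. chain_law V E J F t \<tau> * chain_kernel V E J F \<tau> \<tau>')"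

definition exp_mag_plus :: "'a set \<Rightarrow> 'a set set \<Rightarrow> ('a set \<Rightarrow> real) \<Rightarrow> 'a set \<Rightarrow> nat \<Rightarrow> real" where
  "exp_mag_plus V E J F t = (\<Sum>\<tau>\<in>configs F. chain_law V E J F t \<tau> * (\<Sum>v\<in>F. \<tau> v))"

end

theory Submission
  imports Defs
begin

text \<open>The chain is a heat-bath dynamics for the marginal \<open>\<nu>\<^sub>F\<close>. Since \<open>\<mu>\<close> is
  ferromagnetic, it satisfies the FKG lattice condition, and by the four functions theorem so
  does \<open>\<nu>\<^sub>F\<close>; hence the conditional probability \<open>p\<^sub>v(\<tau>)\<close> of a plus spin at \<open>v\<close> is
  increasing in \<open>\<tau>\<close>, and the transition operator preserves monotone functions. It also preserves
  functions that are odd under the global spin flip. One step of the chain gives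
  \<open>P S = (1 - 1/|F|) S + (1/|F|) D\<close> with drift \<open>D = \<Sum>\<^sub>v (2 p\<^sub>v - 1)\<close>, which is monotone and
  odd; so \<open>P\<^sup>t D\<close> is monotone and odd, hence nonnegative at the all-plus state, and
  \<open>E\<^sub>+ S\<^sub>t\<^sub>+\<^sub>1 \<ge> (1 - 1/|F|) E\<^sub>+ S\<^sub>t\<close>.\<close>

lemma configs_finite: "finite A \<Longrightarrow> finite (configs A)"
  unfolding configs_def by (rule finite_PiE) auto

lemma configs_values: "\<tau> \<in> configs A \<Longrightarrow> i \<in> A \<Longrightarrow> \<tau> i = -1 \<or> \<tau> i = 1"
  unfolding configs_def by auto

lemma configs_undefined: "\<tau> \<in> configs A \<Longrightarrow> i \<notin> A \<Longrightarrow> \<tau> i = undefined"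
  unfolding configs_def by auto

lemma configs_fun_upd_insert: "\<tau> \<in> configs A \<Longrightarrow> s \<in> {-1, 1} \<Longrightarrow> \<tau>(v := s) \<in> configs (insert v A)"
  unfolding configs_def by (auto simp: PiE_def extensional_def Pi_def)

lemma configs_fun_upd: "\<tau> \<in> configs A \<Longrightarrow> v \<in> A \<Longrightarrow> s \<in> {-1, 1} \<Longrightarrow> \<tau>(v := s) \<in> configs A"
  using configs_fun_upd_insert by (metis insert_absorb)

lemma configs_sup: "x \<in> configs A \<Longrightarrow> y \<in> configs A \<Longrightarrow> sup x y \<in> configs A"
  unfolding configs_def by (auto simp: PiE_def extensional_def Pi_def sup_max max_def)

lemma configs_inf: "x \<in> configs A \<Longrightarrow> y \<in> configs A \<Longrightarrow> inf x y \<in> configs A"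
  unfolding configs_def by (auto simp: PiE_def extensional_def Pi_def inf_min min_def)

lemma sup_fun_upd: "sup (x(a := i)) (y(a := j)) = (sup x y)(a := sup i j)"
  by (auto simp: fun_eq_iff)

lemma inf_fun_upd: "inf (x(a := i)) (y(a := j)) = (inf x y)(a := inf i j)"
  by (auto simp: fun_eq_iff)

lemma restrict_sup: "restrict (sup x y) A = sup (restrict x A) (restrict y A)"
  by (auto simp: fun_eq_iff)

lemma restrict_inf: "restrict (inf x y) A = inf (restrict x A) (restrict y A)"
  by (auto simp: fun_eq_iff)

lemma sum_configs_insert:
  assumes "a \<notin> A"
  shows "(\<Sum>\<sigma>\<in>configs (insert a A). f \<sigma>) = (\<Sum>\<eta>\<in>configs A. f (\<eta>(a := -1)) + f (\<eta>(a := 1)))"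
proof -
  have "(\<Sum>\<sigma>\<in>configs (insert a A). f \<sigma>)
      = (\<Sum>p\<in>{-1, 1::real} \<times> configs A. f ((\<lambda>(y, g). g(a := y)) p))"
    unfolding configs_def PiE_insert_eq
    by (subst sum.reindex) (use inj_combinator[OF assms, of "\<lambda>_. {-1, 1::real}"] in auto)
  also have "\<dots> = (\<Sum>y\<in>{-1, 1::real}. \<Sum>\<eta>\<in>configs A. f (\<eta>(a := y)))"
    using sum.cartesian_product[where g="\<lambda>y g. f (g(a := y))" and A="{-1, 1::real}" and B="configs A"]
    by (simp add: case_prod_unfold)
  also have "\<dots> = (\<Sum>\<eta>\<in>configs A. f (\<eta>(a := -1)) + f (\<eta>(a := 1)))"
    by (simp add: sum.distrib)
  finally show ?thesis .
qed

subsection \<open>The four functions theorem on the cube\<close>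

lemma four_functions_two_point:
  fixes a0 a1 b0 b1 c0 c1 d0 d1 :: real
  assumes "0 \<le> a0" "0 \<le> a1" "0 \<le> b0" "0 \<le> b1" "0 \<le> c0" "0 \<le> c1" "0 \<le> d0" "0 \<le> d1"
    and h00: "a0 * b0 \<le> c0 * d0" and h01: "a0 * b1 \<le> c1 * d0" and h10: "a1 * b0 \<le> c1 * d0"
    and h11: "a1 * b1 \<le> c1 * d1"
  shows "(a0 + a1) * (b0 + b1) \<le> (c0 + c1) * (d0 + d1)"
proof -
  define X Y P Q where "X = a0 * b1" and "Y = a1 * b0" and "P = c1 * d0" and "Q = c0 * d1"
  have "X * Y = (a0 * b0) * (a1 * b1)" by (simp add: X_def Y_def algebra_simps)
  also have "\<dots> \<le> (c0 * d0) * (c1 * d1)" by (rule mult_mono[OF h00 h11]) (use assms in auto)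
  also have "\<dots> = P * Q" by (simp add: P_def Q_def algebra_simps)
  finally have XY: "X * Y \<le> P * Q" .
  have XP: "X \<le> P" "Y \<le> P" and "0 \<le> Q"
    using h01 h10 assms by (simp_all add: X_def Y_def P_def Q_def)
  have "X + Y \<le> P + Q"
  proof (cases "P = 0")
    case True
    then show ?thesis using XP \<open>0 \<le> Q\<close> by linarith
  next
    case False
    then have "P > 0" using assms by (simp add: P_def)
    have "P * (X + Y) \<le> P * P + X * Y"
      using mult_nonneg_nonneg[of "P - X" "P - Y"] XP by (simp add: algebra_simps)
    also have "\<dots> \<le> P * (P + Q)" using XY by (simp add: algebra_simps)
    finally show ?thesis using \<open>P > 0\<close> by simp
  qed
  moreover have "(a0 + a1) * (b0 + b1) = a0 * b0 + a1 * b1 + (X + Y)"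
    by (simp add: X_def Y_def algebra_simps)
  moreover have "(c0 + c1) * (d0 + d1) = c0 * d0 + c1 * d1 + (P + Q)"
    by (simp add: P_def Q_def algebra_simps)
  ultimately show ?thesis using h00 h11 by linarith
qed

lemma four_functions_configs:
  fixes f1 f2 f3 f4 :: "('a \<Rightarrow> real) \<Rightarrow> real"
  assumes "finite A"
    and "\<And>x. x \<in> configs A \<Longrightarrow> 0 \<le> f1 x \<and> 0 \<le> f2 x \<and> 0 \<le> f3 x \<and> 0 \<le> f4 x"
    and "\<And>x y. x \<in> configs A \<Longrightarrow> y \<in> configs A \<Longrightarrow> f1 x * f2 y \<le> f3 (sup x y) * f4 (inf x y)"
  shows "(\<Sum>x\<in>configs A. f1 x) * (\<Sum>x\<in>configs A. f2 x) \<le> (\<Sum>x\<in>configs A. f3 x) * (\<Sum>x\<in>configs A. f4 x)"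
  using assms
proof (induction A arbitrary: f1 f2 f3 f4 rule: finite_induct)
  case empty
  then show ?case by (simp add: configs_def)
next
  case (insert a A)
  define g where "g f \<eta> = f (\<eta>(a := -1)) + f (\<eta>(a := 1))" for f :: "('a \<Rightarrow> real) \<Rightarrow> real" and \<eta>
  have upd: "x(a := s) \<in> configs (insert a A)" if "x \<in> configs A" "s \<in> {-1, 1}" for x s
    using configs_fun_upd_insert[OF that] .
  have lattice_g: "g f1 x * g f2 y \<le> g f3 (sup x y) * g f4 (inf x y)"
    if x: "x \<in> configs A" and y: "y \<in> configs A" for x y
  proof -
    have lattice: "f1 (x(a := i)) * f2 (y(a := j))
        \<le> f3 ((sup x y)(a := sup i j)) * f4 ((inf x y)(a := inf i j))"
      if "i \<in> {-1, 1}" "j \<in> {-1, 1}" for i j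
      using insert.prems(2)[OF upd[OF x that(1)] upd[OF y that(2)]]
      by (simp only: sup_fun_upd inf_fun_upd)
    have nonneg: "\<And>z s. z \<in> configs A \<Longrightarrow> s \<in> {-1, 1} \<Longrightarrow>
        0 \<le> f1 (z(a := s)) \<and> 0 \<le> f2 (z(a := s)) \<and> 0 \<le> f3 (z(a := s)) \<and> 0 \<le> f4 (z(a := s))"
      using insert.prems(1) upd by blast
    show ?thesis
      unfolding g_def
      using four_functions_two_point nonneg[OF x] nonneg[OF y]
        nonneg[OF configs_sup[OF x y]] nonneg[OF configs_inf[OF x y]]
        lattice[of "-1" "-1"] lattice[of "-1" 1] lattice[of 1 "-1"] lattice[of 1 1]
      by (simp add: sup_max inf_min)
  qed
  have nonneg_g: "0 \<le> g f1 x \<and> 0 \<le> g f2 x \<and> 0 \<le> g f3 x \<and> 0 \<le> g f4 x" if "x \<in> configs A" for x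
    using insert.prems(1)[OF upd[OF that, of "-1"]] insert.prems(1)[OF upd[OF that, of 1]]
    unfolding g_def by (simp add: add_nonneg_nonneg del: fun_upd_apply)
  show ?case
    unfolding sum_configs_insert[OF insert.hyps(2)] g_def[symmetric]
    using nonneg_g lattice_g by (rule insert.IH)
qed

definition spin_flip :: "'a set \<Rightarrow> ('a \<Rightarrow> real) \<Rightarrow> 'a \<Rightarrow> real" where
  "spin_flip A \<tau> = restrict (\<lambda>i. - \<tau> i) A"

definition flip_odd :: "'a set \<Rightarrow> (('a \<Rightarrow> real) \<Rightarrow> real) \<Rightarrow> bool" where
  "flip_odd A g \<longleftrightarrow> (\<forall>\<tau>\<in>configs A. g (spin_flip A \<tau>) = - g \<tau>)"

lemma spin_flip_configs: "\<tau> \<in> configs A \<Longrightarrow> spin_flip A \<tau> \<in> configs A"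
  unfolding configs_def spin_flip_def by (auto simp: PiE_def extensional_def Pi_def)

lemma spin_flip_spin_flip: "\<tau> \<in> configs A \<Longrightarrow> spin_flip A (spin_flip A \<tau>) = \<tau>"
  unfolding spin_flip_def by (auto simp: configs_undefined)

lemma spin_flip_fun_upd: "v \<in> A \<Longrightarrow> (spin_flip A \<tau>)(v := s) = spin_flip A (\<tau>(v := - s))"
  unfolding spin_flip_def by auto

lemma restrict_spin_flip: "F \<subseteq> V \<Longrightarrow> restrict (spin_flip V \<sigma>) F = spin_flip F (restrict \<sigma> F)"
  unfolding spin_flip_def by (auto simp: fun_eq_iff)

lemma mono_flip_odd_nonneg_all_plus:
  assumes "mono_on (configs A) h" and "flip_odd A h"
  shows "0 \<le> h (restrict (\<lambda>_. 1) A)"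
proof -
  let ?plus = "restrict (\<lambda>_. 1::real) A"
  have plus: "?plus \<in> configs A" unfolding configs_def by auto
  have "spin_flip A ?plus \<le> ?plus" by (auto simp: le_fun_def spin_flip_def)
  then have "h (spin_flip A ?plus) \<le> h ?plus"
    using mono_onD[OF assms(1)] spin_flip_configs[OF plus] plus by blast
  moreover have "h (spin_flip A ?plus) = - h ?plus"
    using assms(2) plus unfolding flip_odd_def by blast
  ultimately show ?thesis by linarith
qed

subsection \<open>Ferromagnetic Ising measures and their marginals\<close>

lemma mult_add_mult_le_max_min:
  fixes a b c d :: real
  shows "a * b + c * d \<le> max a c * max b d + min a c * min b d"
proof (cases "a \<le> c"; cases "b \<le> d")
  assume "a \<le> c" "\<not> b \<le> d"
  then have "(c - a) * (b - d) \<ge> 0" by simp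
  then show ?thesis using \<open>a \<le> c\<close> \<open>\<not> b \<le> d\<close> by (simp add: algebra_simps)
next
  assume "\<not> a \<le> c" "b \<le> d"
  then have "(a - c) * (d - b) \<ge> 0" by simp
  then show ?thesis using \<open>\<not> a \<le> c\<close> \<open>b \<le> d\<close> by (simp add: algebra_simps)
qed simp_all

locale ferromagnet =
  fixes V :: "'a set" and E :: "'a set set" and J :: "'a set \<Rightarrow> real" and F :: "'a set"
  assumes finite_V: "finite V"
    and edges: "\<And>e. e \<in> E \<Longrightarrow> \<exists>u v. u \<in> V \<and> v \<in> V \<and> u \<noteq> v \<and> e = {u, v}"
    and J_nonneg: "\<And>e. e \<in> E \<Longrightarrow> 0 \<le> J e"
    and F_subset: "F \<subseteq> V"
begin

abbreviation \<nu> :: "('a \<Rightarrow> real) \<Rightarrow> real" where "\<nu> \<equiv> marginal V E J F"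

lemma finite_F: "finite F"
  using finite_V F_subset finite_subset by blast

lemma partition_fn_pos: "0 < partition_fn V E J"
proof -
  have "restrict (\<lambda>_. 1) V \<in> configs V" unfolding configs_def by auto
  then show ?thesis unfolding partition_fn_def ising_weight_def
    by (intro sum_pos configs_finite finite_V) auto
qed

lemma ising_pos: "0 < ising V E J \<sigma>"
  unfolding ising_def using partition_fn_pos by (simp add: ising_weight_def)

lemma marginal_pos:
  assumes "\<tau> \<in> configs F"
  shows "0 < \<nu> \<tau>"
proof -
  define \<sigma> where "\<sigma> = restrict (\<lambda>i. if i \<in> F then \<tau> i else 1) V"
  have "\<sigma> \<in> configs V" using assms unfolding \<sigma>_def configs_def by (auto simp: PiE_def Pi_def)
  moreover have "restrict \<sigma> F = \<tau>"
    using assms F_subset unfolding \<sigma>_def by (auto simp: fun_eq_iff dest: configs_undefined)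
  ultimately have "{\<sigma>\<in>configs V. restrict \<sigma> F = \<tau>} \<noteq> {}" by blast
  then show ?thesis unfolding marginal_def
    by (intro sum_pos) (use configs_finite[OF finite_V] ising_pos in auto)
qed

lemma marginal_fun_upd_pos: "\<tau> \<in> configs F \<Longrightarrow> v \<in> F \<Longrightarrow> s \<in> {-1, 1} \<Longrightarrow> 0 < \<nu> (\<tau>(v := s))"
  by (rule marginal_pos[OF configs_fun_upd])

lemma ising_spin_flip:
  assumes "\<sigma> \<in> configs V"
  shows "ising V E J (spin_flip V \<sigma>) = ising V E J \<sigma>"
proof -
  have "(\<Prod>w\<in>e. spin_flip V \<sigma> w) = (\<Prod>w\<in>e. \<sigma> w)" if "e \<in> E" for e
    using edges[OF that] by (auto simp: spin_flip_def)
  then show ?thesis unfolding ising_def ising_weight_def by simp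
qed

lemma marginal_spin_flip:
  assumes "\<tau> \<in> configs F"
  shows "\<nu> (spin_flip F \<tau>) = \<nu> \<tau>"
  unfolding marginal_def
  by (rule sum.reindex_bij_witness[where i="spin_flip V" and j="spin_flip V"])
    (use assms F_subset in \<open>auto simp: spin_flip_spin_flip spin_flip_configs restrict_spin_flip ising_spin_flip\<close>)

text \<open>The FKG lattice condition: the Ising measure is log-supermodular, because each
  ferromagnetic pair term \<open>J\<^sub>u\<^sub>v \<sigma>(u) \<sigma>(v)\<close> is supermodular.\<close>

lemma ising_lattice:
  assumes "x \<in> configs V" "y \<in> configs V"
  shows "ising V E J x * ising V E J y \<le> ising V E J (sup x y) * ising V E J (inf x y)"
proof -
  let ?H = "\<lambda>\<sigma>. \<Sum>e\<in>E. J e * (\<Prod>v\<in>e. \<sigma> v)"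
  have "?H x + ?H y \<le> ?H (sup x y) + ?H (inf x y)"
    unfolding sum.distrib[symmetric]
  proof (rule sum_mono)
    fix e assume e: "e \<in> E"
    then obtain u v where "u \<noteq> v" "e = {u, v}" using edges by blast
    then show "J e * (\<Prod>v\<in>e. x v) + J e * (\<Prod>v\<in>e. y v)
        \<le> J e * (\<Prod>v\<in>e. sup x y v) + J e * (\<Prod>v\<in>e. inf x y v)"
      using mult_left_mono[OF mult_add_mult_le_max_min J_nonneg[OF e]]
      by (simp add: sup_max inf_min algebra_simps)
  qed
  then have "ising_weight E J x * ising_weight E J y
      \<le> ising_weight E J (sup x y) * ising_weight E J (inf x y)"
    unfolding ising_weight_def by (simp add: exp_add[symmetric])
  then show ?thesis
    unfolding ising_def using partition_fn_pos by (simp add: divide_right_mono)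
qed

lemma marginal_as_sum: "\<nu> \<rho> = (\<Sum>\<sigma>\<in>configs V. if restrict \<sigma> F = \<rho> then ising V E J \<sigma> else 0)"
  unfolding marginal_def by (rule sum.inter_filter[OF configs_finite[OF finite_V]])

lemma marginal_lattice:
  assumes "\<tau> \<le> \<tau>'"
  shows "\<nu> (\<tau>(v := 1)) * \<nu> (\<tau>'(v := -1)) \<le> \<nu> (\<tau>'(v := 1)) * \<nu> (\<tau>(v := -1))"
proof -
  define w where "w \<rho> \<sigma> = (if restrict \<sigma> F = \<rho> then ising V E J \<sigma> else 0)" for \<rho> \<sigma>
  have sup_upd: "sup (\<tau>(v := 1)) (\<tau>'(v := -1)) = \<tau>'(v := 1)"
    and inf_upd: "inf (\<tau>(v := 1)) (\<tau>'(v := -1)) = \<tau>(v := -1)"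
    using assms by (auto simp: fun_eq_iff le_fun_def sup_max inf_min)
  have "w (\<tau>(v := 1)) x * w (\<tau>'(v := -1)) y \<le> w (\<tau>'(v := 1)) (sup x y) * w (\<tau>(v := -1)) (inf x y)"
    if "x \<in> configs V" "y \<in> configs V" for x y
    using ising_lattice[OF that] ising_pos[THEN less_imp_le]
    by (auto simp: w_def restrict_sup restrict_inf sup_upd inf_upd)
  then show ?thesis
    unfolding marginal_as_sum w_def[symmetric]
    by (intro four_functions_configs[OF finite_V]) (auto simp: w_def ising_pos less_imp_le)
qed

subsection \<open>The heat-bath dynamics on \<open>F\<close>\<close>

definition plus_prob :: "'a \<Rightarrow> ('a \<Rightarrow> real) \<Rightarrow> real" where
  "plus_prob v \<tau> = \<nu> (\<tau>(v := 1)) / (\<nu> (\<tau>(v := 1)) + \<nu> (\<tau>(v := -1)))"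

definition transition_op :: "(('a \<Rightarrow> real) \<Rightarrow> real) \<Rightarrow> ('a \<Rightarrow> real) \<Rightarrow> real" where
  "transition_op g \<tau> = (\<Sum>\<tau>'\<in>configs F. chain_kernel V E J F \<tau> \<tau>' * g \<tau>')"

lemma plus_prob_bounds:
  assumes "\<tau> \<in> configs F" "v \<in> F"
  shows "0 \<le> plus_prob v \<tau>" "plus_prob v \<tau> \<le> 1"
  using marginal_fun_upd_pos[OF assms, of 1] marginal_fun_upd_pos[OF assms, of "-1"]
  unfolding plus_prob_def by auto

lemma one_minus_plus_prob:
  assumes "\<tau> \<in> configs F" "v \<in> F"
  shows "1 - plus_prob v \<tau> = \<nu> (\<tau>(v := -1)) / (\<nu> (\<tau>(v := 1)) + \<nu> (\<tau>(v := -1)))"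
  using marginal_fun_upd_pos[OF assms, of 1] marginal_fun_upd_pos[OF assms, of "-1"]
  unfolding plus_prob_def by (simp add: field_simps)

lemma plus_prob_spin_flip:
  assumes "\<tau> \<in> configs F" "v \<in> F"
  shows "plus_prob v (spin_flip F \<tau>) = 1 - plus_prob v \<tau>"
proof -
  have "\<nu> ((spin_flip F \<tau>)(v := s)) = \<nu> (\<tau>(v := - s))" if "- s \<in> {-1, 1}" for s
    using marginal_spin_flip[OF configs_fun_upd[OF assms that]]
    by (simp add: spin_flip_fun_upd[OF assms(2)])
  then show ?thesis
    unfolding one_minus_plus_prob[OF assms] by (simp add: plus_prob_def add.commute)
qed

lemma plus_prob_mono:
  assumes "\<tau> \<le> \<tau>'" "\<tau> \<in> configs F" "\<tau>' \<in> configs F" "v \<in> F"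
  shows "plus_prob v \<tau> \<le> plus_prob v \<tau>'"
proof -
  have "0 < \<nu> (\<tau>(v := 1))" "0 < \<nu> (\<tau>(v := -1))" "0 < \<nu> (\<tau>'(v := 1))" "0 < \<nu> (\<tau>'(v := -1))"
    using marginal_fun_upd_pos assms(2-4) by auto
  moreover have "\<nu> (\<tau>(v := 1)) * (\<nu> (\<tau>'(v := 1)) + \<nu> (\<tau>'(v := -1)))
      \<le> \<nu> (\<tau>'(v := 1)) * (\<nu> (\<tau>(v := 1)) + \<nu> (\<tau>(v := -1)))"
    using marginal_lattice[OF assms(1), of v] by (simp add: algebra_simps)
  ultimately show ?thesis unfolding plus_prob_def by (simp add: field_simps)
qed

lemma heat_bath_neighbours:
  assumes "\<tau> \<in> configs F" "v \<in> F"
  shows "{\<tau>'\<in>configs F. \<forall>u\<in>F - {v}. \<tau>' u = \<tau> u} = {\<tau>(v := 1), \<tau>(v := -1)}"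
proof
  show "{\<tau>'\<in>configs F. \<forall>u\<in>F - {v}. \<tau>' u = \<tau> u} \<subseteq> {\<tau>(v := 1), \<tau>(v := -1)}"
  proof
    fix \<tau>' assume \<tau>': "\<tau>' \<in> {\<tau>'\<in>configs F. \<forall>u\<in>F - {v}. \<tau>' u = \<tau> u}"
    then have "\<tau>' i = (\<tau>(v := \<tau>' v)) i" for i
      using assms(1) by (cases "i \<in> F") (auto simp: configs_undefined)
    then have "\<tau>' = \<tau>(v := \<tau>' v)" ..
    then show "\<tau>' \<in> {\<tau>(v := 1), \<tau>(v := -1)}"
      using configs_values[of \<tau>' F v] \<tau>' assms(2) by auto
  qed
  show "{\<tau>(v := 1), \<tau>(v := -1)} \<subseteq> {\<tau>'\<in>configs F. \<forall>u\<in>F - {v}. \<tau>' u = \<tau> u}"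
    using configs_fun_upd[OF assms] by auto
qed

lemma transition_op_heat_bath:
  assumes "\<tau> \<in> configs F"
  shows "transition_op g \<tau> = (1 / real (card F)) *
     (\<Sum>v\<in>F. plus_prob v \<tau> * g (\<tau>(v := 1)) + (1 - plus_prob v \<tau>) * g (\<tau>(v := -1)))"
proof -
  let ?N = "\<lambda>v. {\<tau>'\<in>configs F. \<forall>u\<in>F - {v}. \<tau>' u = \<tau> u}"
  let ?Z = "\<lambda>v. \<nu> (\<tau>(v := 1)) + \<nu> (\<tau>(v := -1))"
  have local_sum: "(\<Sum>\<tau>'\<in>?N v. \<nu> \<tau>' / ?Z v * g \<tau>')
      = plus_prob v \<tau> * g (\<tau>(v := 1)) + (1 - plus_prob v \<tau>) * g (\<tau>(v := -1))"
    if "v \<in> F" for v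
  proof -
    have "\<tau>(v := 1) \<noteq> \<tau>(v := -1)" by (metis fun_upd_same one_neq_neg_one)
    then show ?thesis
      unfolding heat_bath_neighbours[OF assms that] one_minus_plus_prob[OF assms that]
      by (simp add: plus_prob_def)
  qed
  have "transition_op g \<tau> = (\<Sum>\<tau>'\<in>configs F. \<Sum>v\<in>F. (1 / real (card F)) *
      (if \<forall>u\<in>F - {v}. \<tau>' u = \<tau> u then \<nu> \<tau>' / ?Z v * g \<tau>' else 0))"
    unfolding transition_op_def chain_kernel_def sum_distrib_left sum_distrib_right
    by (intro sum.cong refl) simp
  also have "\<dots> = (1 / real (card F)) * (\<Sum>v\<in>F. \<Sum>\<tau>'\<in>configs F.
      if \<forall>u\<in>F - {v}. \<tau>' u = \<tau> u then \<nu> \<tau>' / ?Z v * g \<tau>' else 0)"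
    by (subst sum.swap) (simp add: sum_distrib_left)
  also have "\<dots> = (1 / real (card F)) * (\<Sum>v\<in>F. \<Sum>\<tau>'\<in>?N v. \<nu> \<tau>' / ?Z v * g \<tau>')"
    by (simp only: sum.inter_filter[OF configs_finite[OF finite_F], symmetric])
  also have "\<dots> = (1 / real (card F)) *
     (\<Sum>v\<in>F. plus_prob v \<tau> * g (\<tau>(v := 1)) + (1 - plus_prob v \<tau>) * g (\<tau>(v := -1)))"
    by (simp only: local_sum cong: sum.cong)
  finally show ?thesis .
qed

lemma transition_op_mono:
  assumes g: "mono_on (configs F) g"
  shows "mono_on (configs F) (transition_op g)"
proof (rule mono_onI)
  fix \<tau> \<tau>' assume \<tau>: "\<tau> \<in> configs F" and \<tau>': "\<tau>' \<in> configs F" and le: "\<tau> \<le> \<tau>'"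
  have "(\<Sum>v\<in>F. plus_prob v \<tau> * g (\<tau>(v := 1)) + (1 - plus_prob v \<tau>) * g (\<tau>(v := -1)))
     \<le> (\<Sum>v\<in>F. plus_prob v \<tau>' * g (\<tau>'(v := 1)) + (1 - plus_prob v \<tau>') * g (\<tau>'(v := -1)))"
  proof (rule sum_mono)
    fix v assume v: "v \<in> F"
    let ?p = "plus_prob v \<tau>" and ?p' = "plus_prob v \<tau>'"
    let ?a = "g (\<tau>(v := -1))" and ?b = "g (\<tau>(v := 1))"
      and ?a' = "g (\<tau>'(v := -1))" and ?b' = "g (\<tau>'(v := 1))"
    have upd: "\<tau>(v := s) \<in> configs F" "\<tau>'(v := s) \<in> configs F" if "s \<in> {-1, 1}" for s
      using configs_fun_upd[OF \<tau> v that] configs_fun_upd[OF \<tau>' v that] by auto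
    have "?a \<le> ?b" using mono_onD[OF g upd(1) upd(1)] by (auto simp: le_fun_def)
    have "?a \<le> ?a'" "?b \<le> ?b'"
      using mono_onD[OF g upd(1) upd(2)] le by (auto simp: le_fun_def)
    have "?p \<le> ?p'" by (rule plus_prob_mono[OF le \<tau> \<tau>' v])
    have "0 \<le> ?p'" "?p' \<le> 1" using plus_prob_bounds[OF \<tau>' v] by auto
    \<comment> \<open>Raise the bias of the coin first, then its two outcomes.\<close>
    have "?p * ?b + (1 - ?p) * ?a \<le> ?p' * ?b + (1 - ?p') * ?a"
      using mult_right_mono[OF \<open>?p \<le> ?p'\<close>, of "?b - ?a"] \<open>?a \<le> ?b\<close> by (simp add: algebra_simps)
    also have "\<dots> \<le> ?p' * ?b' + (1 - ?p') * ?a'"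
      using mult_left_mono[OF \<open>?b \<le> ?b'\<close> \<open>0 \<le> ?p'\<close>] mult_left_mono[OF \<open>?a \<le> ?a'\<close>, of "1 - ?p'"]
        \<open>?p' \<le> 1\<close> by simp
    finally show "?p * ?b + (1 - ?p) * ?a \<le> ?p' * ?b' + (1 - ?p') * ?a'" .
  qed
  then show "transition_op g \<tau> \<le> transition_op g \<tau>'"
    unfolding transition_op_heat_bath[OF \<tau>] transition_op_heat_bath[OF \<tau>'] by (simp add: divide_right_mono)
qed

lemma transition_op_flip_odd:
  assumes g: "flip_odd F g"
  shows "flip_odd F (transition_op g)"
  unfolding flip_odd_def
proof
  fix \<tau> assume \<tau>: "\<tau> \<in> configs F"
  have flip_upd: "g ((spin_flip F \<tau>)(v := s)) = - g (\<tau>(v := - s))" if "v \<in> F" "- s \<in> {-1, 1}" for v s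
    using g configs_fun_upd[OF \<tau> that] that
    unfolding flip_odd_def by (simp add: spin_flip_fun_upd)
  have "(\<Sum>v\<in>F. plus_prob v (spin_flip F \<tau>) * g ((spin_flip F \<tau>)(v := 1))
        + (1 - plus_prob v (spin_flip F \<tau>)) * g ((spin_flip F \<tau>)(v := -1)))
      = - (\<Sum>v\<in>F. plus_prob v \<tau> * g (\<tau>(v := 1)) + (1 - plus_prob v \<tau>) * g (\<tau>(v := -1)))"
    unfolding sum_negf[symmetric]
    by (rule sum.cong) (simp_all add: flip_upd plus_prob_spin_flip[OF \<tau>] algebra_simps)
  then show "transition_op g (spin_flip F \<tau>) = - transition_op g \<tau>"
    unfolding transition_op_heat_bath[OF \<tau>] transition_op_heat_bath[OF spin_flip_configs[OF \<tau>]]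
    by simp
qed

lemma funpow_transition_op_mono: "mono_on (configs F) g \<Longrightarrow> mono_on (configs F) ((transition_op ^^ t) g)"
  by (induction t) (auto intro: transition_op_mono)

lemma funpow_transition_op_flip_odd: "flip_odd F g \<Longrightarrow> flip_odd F ((transition_op ^^ t) g)"
  by (induction t) (auto intro: transition_op_flip_odd)

abbreviation all_plus :: "'a \<Rightarrow> real" where "all_plus \<equiv> restrict (\<lambda>_. 1) F"

lemma chain_law_Suc_expectation:
  "(\<Sum>\<tau>\<in>configs F. chain_law V E J F (Suc t) \<tau> * g \<tau>)
     = (\<Sum>\<tau>\<in>configs F. chain_law V E J F t \<tau> * transition_op g \<tau>)"
  unfolding transition_op_def chain_law.simps sum_distrib_left sum_distrib_right
  by (subst sum.swap) (simp add: mult.assoc)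

lemma chain_law_expectation:
  "(\<Sum>\<tau>\<in>configs F. chain_law V E J F t \<tau> * g \<tau>) = (transition_op ^^ t) g all_plus"
proof (induction t arbitrary: g)
  case 0
  have "all_plus \<in> configs F" unfolding configs_def by auto
  have "(\<Sum>\<tau>\<in>configs F. chain_law V E J F 0 \<tau> * g \<tau>) = (\<Sum>\<tau>\<in>configs F. if \<tau> = all_plus then g \<tau> else 0)"
    by (intro sum.cong) auto
  also have "\<dots> = g all_plus"
    using \<open>all_plus \<in> configs F\<close> configs_finite[OF finite_F] by simp
  finally show ?case by (simp only: funpow_0)
next
  case (Suc t)
  have "(\<Sum>\<tau>\<in>configs F. chain_law V E J F (Suc t) \<tau> * g \<tau>)
      = (\<Sum>\<tau>\<in>configs F. chain_law V E J F t \<tau> * transition_op g \<tau>)"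
    by (rule chain_law_Suc_expectation)
  also have "\<dots> = (transition_op ^^ t) (transition_op g) all_plus" by (rule Suc.IH)
  finally show ?case by (simp only: funpow_Suc_right o_apply)
qed

definition magnetization :: "('a \<Rightarrow> real) \<Rightarrow> real" where
  "magnetization \<tau> = (\<Sum>v\<in>F. \<tau> v)"

definition drift :: "('a \<Rightarrow> real) \<Rightarrow> real" where
  "drift \<tau> = (\<Sum>v\<in>F. 2 * plus_prob v \<tau> - 1)"

lemma drift_mono: "mono_on (configs F) drift"
  unfolding drift_def by (auto intro!: mono_onI sum_mono plus_prob_mono)

lemma drift_flip_odd: "flip_odd F drift"
  unfolding flip_odd_def drift_def by (auto simp: plus_prob_spin_flip sum_negf[symmetric] intro!: sum.cong)

lemma magnetization_fun_upd: "v \<in> F \<Longrightarrow> magnetization (\<tau>(v := s)) = magnetization \<tau> - \<tau> v + s"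
  unfolding magnetization_def
  using sum.remove[OF finite_F, of v "\<tau>(v := s)"] sum.remove[OF finite_F, of v \<tau>] by simp

lemma transition_op_magnetization:
  assumes "\<tau> \<in> configs F" and "F \<noteq> {}"
  shows "transition_op magnetization \<tau>
    = (1 - 1 / real (card F)) * magnetization \<tau> + (1 / real (card F)) * drift \<tau>"
proof -
  have "(\<Sum>v\<in>F. plus_prob v \<tau> * magnetization (\<tau>(v := 1))
          + (1 - plus_prob v \<tau>) * magnetization (\<tau>(v := -1)))
      = (\<Sum>v\<in>F. magnetization \<tau> + (2 * plus_prob v \<tau> - 1) - \<tau> v)"
    by (intro sum.cong refl) (simp add: magnetization_fun_upd algebra_simps)
  also have "\<dots> = real (card F) * magnetization \<tau> + drift \<tau> - magnetization \<tau>"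
    by (simp add: sum.distrib sum_subtractf drift_def magnetization_def)
  finally show ?thesis
    unfolding transition_op_heat_bath[OF assms(1)]
    using assms(2) finite_F by (simp add: field_simps)
qed

lemma exp_mag_plus_lower_bound:
  assumes "F \<noteq> {}"
  shows "real (card F) * (1 - 1 / real (card F)) ^ t \<le> exp_mag_plus V E J F t"
proof (induction t)
  case 0
  show ?case
    using chain_law_expectation[of 0 magnetization]
    by (simp add: exp_mag_plus_def magnetization_def)
next
  case (Suc t)
  let ?c = "1 - 1 / real (card F)"
  have "0 \<le> ?c" using assms finite_F by (simp add: Suc_le_eq card_gt_0_iff)
  have "exp_mag_plus V E J F (Suc t)
      = (\<Sum>\<tau>\<in>configs F. chain_law V E J F t \<tau> * transition_op magnetization \<tau>)"
    unfolding exp_mag_plus_def magnetization_def[symmetric] by (rule chain_law_Suc_expectation)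
  also have "\<dots> = (\<Sum>\<tau>\<in>configs F. chain_law V E J F t \<tau> *
      (?c * magnetization \<tau> + (1 / real (card F)) * drift \<tau>))"
    by (intro sum.cong refl) (simp add: transition_op_magnetization[OF _ assms])
  also have "\<dots> = ?c * exp_mag_plus V E J F t
      + (1 / real (card F)) * (\<Sum>\<tau>\<in>configs F. chain_law V E J F t \<tau> * drift \<tau>)"
    unfolding distrib_left sum.distrib exp_mag_plus_def magnetization_def
    by (simp add: sum_distrib_left mult_ac)
  also have "\<dots> \<ge> ?c * exp_mag_plus V E J F t"
    using mono_flip_odd_nonneg_all_plus[OF funpow_transition_op_mono[OF drift_mono]
        funpow_transition_op_flip_odd[OF drift_flip_odd]]
    by (simp add: chain_law_expectation)
  finally show ?case
    using mult_left_mono[OF Suc.IH \<open>0 \<le> ?c\<close>] by (simp add: mult_ac)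
qed

end

theorem lemma2p5:
  fixes V :: "'a set" and E :: "'a set set" and J :: "'a set \<Rightarrow> real"
    and F :: "'a set" and n :: nat and t :: nat
  assumes "finite V" and "card V = n"
    and "\<forall>e\<in>E. \<exists>u v. u \<in> V \<and> v \<in> V \<and> u \<noteq> v \<and> e = {u, v}"
    and "\<forall>e\<in>E. J e \<ge> 0"
    and "F \<subseteq> V"
    and "card F = nat \<lfloor>sqrt (real n) / ln (real n)\<rfloor>"
    and "(\<Sum>u\<in>F. \<Sum>v\<in>F - {u}. ising_cov V E J u v) \<le> 2 / ln (real n)"
  shows "exp_mag_plus V E J F t \<ge> real (card F) * (1 - 1 / real (card F)) ^ t"
proof (cases "F = {}")
  case True
  then show ?thesis by (simp add: exp_mag_plus_def)
next
  case False
  interpret ferromagnet V E J F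
    using assms by unfold_locales auto
  show ?thesis using exp_mag_plus_lower_bound[OF False] .
qed

end
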